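(* $|\mathsf{Agg}|=2^{\mathfrak{c}}$, where $\mathfrak{c}=2^{\aleph_0}$.
   Context: An $n$-ary aggregation function on $[0,1]$ is a function $f\colon[0,1]^n\to[0,1]$ nondecreasing in each coordinate with $f(0,\dots,0)=0$ and $f(1,\dots,1)=1$; $\mathsf{Agg}$ is the set of all aggregation functions of all finite arities $n\in\mathbb{N}$. *)

theory Defs
  imports Complex_Main "HOL-Library.Equipollence"
begin

definition unit_cube :: "nat \<Rightarrow> real list set" where
  "unit_cube n = {xs. length xs = n \<and> (\<forall>i<n. 0 \<le> xs ! i \<and> xs ! i \<le> 1)}"

text \<open>An n-ary aggregation function: a function on [0,1]^n into [0,1], nondecreasing in
each coordinate, with f(0,...,0)=0 and f(1,...,1)=1. To make the function a genuine
mathematical object with domain [0,1]^n, we require it to be 0 outside the cube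
(extensionality), so that distinct aggregation functions correspond to distinct HOL terms.\<close>
definition is_agg :: "nat \<Rightarrow> (real list \<Rightarrow> real) \<Rightarrow> bool" where
  "is_agg n f \<longleftrightarrow>
     (\<forall>xs. xs \<notin> unit_cube n \<longrightarrow> f xs = 0) \<and>
     (\<forall>xs\<in>unit_cube n. 0 \<le> f xs \<and> f xs \<le> 1) \<and>
     (\<forall>xs\<in>unit_cube n. \<forall>i<n. \<forall>t. xs ! i \<le> t \<and> t \<le> 1 \<longrightarrow> f xs \<le> f (xs[i := t])) \<and>
     f (replicate n 0) = 0 \<and> f (replicate n 1) = 1"

definition Agg :: "(nat \<times> (real list \<Rightarrow> real)) set" where
  "Agg = {(n, f). is_agg n f}"

end

theory Submission
  imports Defs "HOL-Analysis.Analysis"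
begin

text \<open>For the lower bound, every set \<open>S \<subseteq> [0,1]\<close> gives a binary aggregation function that is
\<open>1\<close> above the antidiagonal \<open>x + y = 1\<close>, \<open>0\<close> below it, and the indicator of \<open>S\<close> (read off
the first coordinate) on it; distinct \<open>S\<close> give distinct functions.  For the upper bound, an
aggregation function determines its arity and is determined by its graph, a subset of
the set of pairs (finite real sequence, real), which has the cardinality of the continuum.\<close>

lemma Pow_lepoll_mono:
  assumes "A \<lesssim> B"
  shows "Pow A \<lesssim> Pow B"
proof -
  obtain f where "inj_on f A" "f \<in> A \<rightarrow> B"
    using assms unfolding lepoll_def' by blast
  then have "inj_on (image f) (Pow A)" "image f \<in> Pow A \<rightarrow> Pow B"
    by (auto simp: inj_on_image_Pow)
  then show ?thesis
    unfolding lepoll_def' by blast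
qed

lemma functions_lepoll_Pow_graphs: "(UNIV :: ('a \<Rightarrow> 'b) set) \<lesssim> Pow (UNIV :: ('a \<times> 'b) set)"
proof -
  have "inj (\<lambda>f. range (\<lambda>x. (x, f x)))"
    by (rule injI) (auto simp: fun_eq_iff)
  then show ?thesis
    unfolding lepoll_def' by blast
qed

lemma nat_set_sequences_lepoll_nat_sets: "(UNIV :: (nat \<Rightarrow> nat set) set) \<lesssim> (UNIV :: nat set set)"
proof -
  have "inj (\<lambda>F. Sigma UNIV F :: (nat \<times> nat) set)"
    by (rule injI) (auto simp: fun_eq_iff)
  then have "inj (\<lambda>F. prod_encode ` Sigma UNIV F)"
    by (simp add: inj_def inj_image_eq_iff[OF inj_prod_encode])
  then show ?thesis
    unfolding lepoll_def' by blast
qed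

lemma real_sequences_lepoll_nat_sets: "(UNIV :: (nat \<Rightarrow> real) set) \<lesssim> (UNIV :: nat set set)"
proof -
  obtain r :: "real \<Rightarrow> nat set" where "inj r"
    using eqpoll_sym[OF nat_sets_eqpoll_reals] unfolding eqpoll_def bij_betw_def by blast
  then have "inj (\<lambda>s. r \<circ> s)"
    by (auto simp: inj_def fun_eq_iff)
  then have "(UNIV :: (nat \<Rightarrow> real) set) \<lesssim> (UNIV :: (nat \<Rightarrow> nat set) set)"
    unfolding lepoll_def' by blast
  then show ?thesis
    using nat_set_sequences_lepoll_nat_sets lepoll_trans by blast
qed

lemma real_lists_lepoll_real_sequences: "(UNIV :: real list set) \<lesssim> (UNIV :: (nat \<Rightarrow> real) set)"
proof -
  have "inj (\<lambda>xs k. if k = 0 then real (length xs) else xs ! (k - 1))"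
  proof (rule injI)
    fix xs ys :: "real list"
    assume eq: "(\<lambda>k. if k = 0 then real (length xs) else xs ! (k - 1)) =
                (\<lambda>k. if k = 0 then real (length ys) else ys ! (k - 1))"
    have "length xs = length ys"
      using fun_cong[OF eq, of 0] by simp
    moreover have "xs ! i = ys ! i" for i
      using fun_cong[OF eq, of "Suc i"] by simp
    ultimately show "xs = ys"
      by (simp add: nth_equalityI)
  qed
  then show ?thesis
    unfolding lepoll_def' by blast
qed

lemma real_lists_times_reals_lepoll_nat_sets:
  "(UNIV :: (real list \<times> real) set) \<lesssim> (UNIV :: nat set set)"
proof -
  have "inj (\<lambda>(xs, y). y # xs :: real list)"
    by (rule injI) auto
  then have "(UNIV :: (real list \<times> real) set) \<lesssim> (UNIV :: real list set)"
    unfolding lepoll_def' by blast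
  also note real_lists_lepoll_real_sequences
  also note real_sequences_lepoll_nat_sets
  finally show ?thesis .
qed

lemma is_agg_arity_unique:
  assumes "is_agg m f" "is_agg n f"
  shows "m = n"
proof -
  have "f (replicate n 1) \<noteq> 0"
    using assms(2) by (simp add: is_agg_def)
  then have "replicate n 1 \<in> unit_cube m"
    using assms(1) unfolding is_agg_def by blast
  then show ?thesis
    by (simp add: unit_cube_def)
qed

lemma Agg_lepoll_Pow_Pow_nat: "Agg \<lesssim> Pow (Pow (UNIV :: nat set))"
proof -
  have "inj_on snd Agg"
    by (rule inj_onI) (auto simp: Agg_def dest: is_agg_arity_unique)
  then have "Agg \<lesssim> (UNIV :: (real list \<Rightarrow> real) set)"
    unfolding lepoll_def' by blast
  also note functions_lepoll_Pow_graphs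
  also have "Pow (UNIV :: (real list \<times> real) set) \<lesssim> Pow (Pow (UNIV :: nat set))"
    using Pow_lepoll_mono[OF real_lists_times_reals_lepoll_nat_sets] by simp
  finally show ?thesis .
qed

definition antidiagonal_agg :: "real set \<Rightarrow> real list \<Rightarrow> real" where
  "antidiagonal_agg S xs =
     (if xs \<in> unit_cube 2 \<and> (xs ! 0 + xs ! 1 > 1 \<or> xs ! 0 + xs ! 1 = 1 \<and> xs ! 0 \<in> S)
      then 1 else 0)"

lemma antidiagonal_upper_set_mono:
  fixes x y x' y' :: real
  assumes "x \<le> x'" "y \<le> y'" "x + y > 1 \<or> x + y = 1 \<and> x \<in> S"
  shows "x' + y' > 1 \<or> x' + y' = 1 \<and> x' \<in> S"
proof (cases "x' + y' > 1")
  case False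
  then have "x' = x"
    using assms by linarith
  then show ?thesis
    using assms False by auto
qed simp

lemma is_agg_antidiagonal_agg: "is_agg 2 (antidiagonal_agg S)"
proof -
  have mono: "antidiagonal_agg S xs \<le> antidiagonal_agg S (xs[i := t])"
    if xs: "xs \<in> unit_cube 2" and "i < 2" "xs ! i \<le> t" "t \<le> 1" for xs i t
  proof -
    have "xs[i := t] \<in> unit_cube 2"
      using that by (auto simp: unit_cube_def nth_list_update)
    moreover have "xs ! j \<le> xs[i := t] ! j" for j
      using that by (cases "j = i") (auto simp: unit_cube_def)
    ultimately show ?thesis
      using antidiagonal_upper_set_mono[of "xs ! 0" "xs[i := t] ! 0" "xs ! 1" "xs[i := t] ! 1" S]
      unfolding antidiagonal_agg_def by auto
  qed
  have "replicate 2 0 \<in> unit_cube 2" "replicate 2 1 \<in> unit_cube 2"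
    by (auto simp: unit_cube_def)
  then show ?thesis
    unfolding is_agg_def using mono
    by (auto simp: antidiagonal_agg_def numeral_2_eq_2)
qed

lemma antidiagonal_agg_inj: "inj_on antidiagonal_agg (Pow {0..1})"
proof (rule inj_onI)
  fix S T assume ST: "S \<in> Pow {0..1}" "T \<in> Pow {0..1}"
    and eq: "antidiagonal_agg S = antidiagonal_agg T"
  have "x \<in> S \<longleftrightarrow> x \<in> T" if "x \<in> {0..1}" for x
  proof -
    have "[x, 1 - x] \<in> unit_cube 2"
      using that by (auto simp: unit_cube_def less_2_cases_iff)
    then show ?thesis
      using fun_cong[OF eq, of "[x, 1 - x]"] by (auto simp: antidiagonal_agg_def split: if_splits)
  qed
  then show "S = T"
    using ST by blast
qed

lemma Pow_Pow_nat_lepoll_Agg: "Pow (Pow (UNIV :: nat set)) \<lesssim> Agg"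
proof -
  have "Pow (Pow (UNIV :: nat set)) \<lesssim> Pow {0..<1 :: real}"
    using Pow_lepoll_mono[OF nat_sets_lepoll_reals01] by simp
  also have "Pow {0..<1 :: real} \<lesssim> Pow {0..1 :: real}"
    by (intro subset_imp_lepoll Pow_mono) auto
  also have "Pow {0..1 :: real} \<lesssim> Agg"
    unfolding lepoll_def'
    using antidiagonal_agg_inj is_agg_antidiagonal_agg
    by (intro exI[of _ "\<lambda>S. (2, antidiagonal_agg S)"]) (auto simp: inj_on_def Agg_def)
  finally show ?thesis .
qed

theorem lemma6:
  shows "Agg \<approx> Pow (Pow (UNIV :: nat set))"
  using lepoll_antisym[OF Agg_lepoll_Pow_Pow_nat Pow_Pow_nat_lepoll_Agg] .

end
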